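(* $\mathrm{P}^*_{\mathrm{lis}}=\mathrm{P/poly}$, where each Boolean function family $(f_n)_{n\in\mathbb N}$ is identified with the language $\{w\in\mathbb B^*: f_{|w|}(w)=T\}$.
   Context: $\mathbb B=\{T,F\}$. A primitive instruction is one of: a plain basic instruction $a$, a positive test instruction $+a$, a negative test instruction $-a$ (for a basic instruction $a$), a forward jump instruction $\#l$ ($l\in\mathbb N$), or the termination instruction $!$. An instruction sequence is a finite nonempty sequence $X=u_1;\dots;u_k$ of primitive instructions; its length is $|X|=k$. Basic instructions have the form $f.m$ where the focus $f$ is one of $\mathrm{in}{:}i$, $\mathrm{aux}{:}i$ ($i\ge 1$) or $\mathrm{out}$, each naming a Boolean register, and the method $m$ is one of $\mathrm{set}{:}T$, $\mathrm{set}{:}F$, $\mathrm{get}$. Executing $f.\mathrm{set}{:}b$ sets register $f$ to $b$ and yields reply $b$; executing $f.\mathrm{get}$ leaves the register unchanged and yields its content as reply. Execution of $X=u_1;\dots;u_k$: a counter starts at $1$. If the counter exceeds $k$, execution deadlocks. At position $i$: if $u_i=!$, execution terminates; if $u_i=\#l$, execution deadlocks if $l=0$ and otherwise the counter becomes $i+l$; if $u_i$ is $a$, $+a$ or $-a$, the basic instruction $a$ is executed yielding reply $r$, and the counter becomes $i+1$ for $u_i=a$; for $u_i=+a$ it becomes $i+1$ if $r=T$ and $i+2$ if $r=F$; for $u_i=-a$ it becomes $i+1$ if $r=F$ and $i+2$ if $r=T$. $\mathrm{IS}_{br}$ is the set of instruction sequences in which every basic instruction occurring belongs to $\{f.\mathrm{get}: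 f=\mathrm{in}{:}i \text{ or } f=\mathrm{aux}{:}i\}\cup\{f.\mathrm{set}{:}b: f=\mathrm{aux}{:}i \text{ or } f=\mathrm{out},\ b\in\mathbb B\}$. $X\in\mathrm{IS}_{br}$ computes $f:\mathbb B^n\to\mathbb B$ if for every $(b_1,\dots,b_n)\in\mathbb B^n$: when $X$ is executed with register $\mathrm{in}{:}j$ initialised to $b_j$ ($j\le n$) and all registers $\mathrm{aux}{:}i$ and $\mathrm{out}$ initialised to $F$, execution terminates (does not deadlock) without ever executing a basic instruction with focus $\mathrm{in}{:}j$ for $j>n$, and at termination register $\mathrm{out}$ contains $f(b_1,\dots,b_n)$. A Boolean function family is a sequence $(f_n)_{n\in\mathbb N}$ with $f_n:\mathbb B^n\to\mathbb B$. $\mathrm{P}^*_{\mathrm{lis}}$ is the class of Boolean function families $(f_n)$ for which there is a polynomial $h:\mathbb N\to\mathbb N$ such that for every $n$ there is $X\in\mathrm{IS}_{br}$ computing $f_n$ with $|X|\le h(n)$. $\mathrm{P/poly}$ is the usual class of languages decided by polynomial-size Boolean circuit families (equivalently, by polynomial-time Turing machines with polynomial-length advice). *)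

theory Defs
  imports "HOL-Computational_Algebra.Polynomial"
begin

datatype focus = FIn nat | FAux nat | FOut
datatype meth = MSet bool | MGet
type_synonym basic = "focus \<times> meth"

datatype instr =
    Plain basic
  | PosTest basic
  | NegTest basic
  | Jump nat
  | Term

text \<open>Register state: contents of the aux registers and of the out register.
  The in registers are never written by members of IS_br, so their contents
  are given by the input word (register in:j holds w ! (j-1)).\<close>
type_synonym regs = "(nat \<Rightarrow> bool) \<times> bool"

text \<open>Executing a basic instruction on input word w. None means execution
  of a forbidden instruction (in particular in:j with j > length w).\<close>
fun exec_basic :: "bool list \<Rightarrow> basic \<Rightarrow> regs \<Rightarrow> (bool \<times> regs) option" where
  "exec_basic w (FIn j, MGet) s =
     (if 1 \<le> j \<and> j \<le> length w then Some (w ! (j - 1), s) else None)"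
| "exec_basic w (FIn j, MSet b) s = None"
| "exec_basic w (FAux i, MGet) (a, ov) = Some (a i, (a, ov))"
| "exec_basic w (FAux i, MSet b) (a, ov) = Some (b, (a(i := b), ov))"
| "exec_basic w (FOut, MGet) (a, ov) = Some (ov, (a, ov))"
| "exec_basic w (FOut, MSet b) (a, ov) = Some (b, (a, b))"

text \<open>terminates X w i s r: execution of X on input w, started with counter i
  (1-based) and register state s, terminates (without deadlock and without
  forbidden instructions) with register out containing r.\<close>
inductive terminates :: "instr list \<Rightarrow> bool list \<Rightarrow> nat \<Rightarrow> regs \<Rightarrow> bool \<Rightarrow> bool"
  for X w where
  halt: "\<lbrakk>1 \<le> i; i \<le> length X; X ! (i - 1) = Term\<rbrakk> \<Longrightarrow> terminates X w i s (snd s)"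
| jump: "\<lbrakk>1 \<le> i; i \<le> length X; X ! (i - 1) = Jump l; l \<noteq> 0;
          terminates X w (i + l) s r\<rbrakk> \<Longrightarrow> terminates X w i s r"
| plain: "\<lbrakk>1 \<le> i; i \<le> length X; X ! (i - 1) = Plain a;
          exec_basic w a s = Some (rep, s'); terminates X w (i + 1) s' r\<rbrakk>
          \<Longrightarrow> terminates X w i s r"
| pos: "\<lbrakk>1 \<le> i; i \<le> length X; X ! (i - 1) = PosTest a;
          exec_basic w a s = Some (rep, s');
          terminates X w (if rep then i + 1 else i + 2) s' r\<rbrakk>
          \<Longrightarrow> terminates X w i s r"
| neg: "\<lbrakk>1 \<le> i; i \<le> length X; X ! (i - 1) = NegTest a;
          exec_basic w a s = Some (rep, s');
          terminates X w (if rep then i + 2 else i + 1) s' r\<rbrakk>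
          \<Longrightarrow> terminates X w i s r"

fun allowed_basic :: "basic \<Rightarrow> bool" where
  "allowed_basic (FIn i, MGet) = (1 \<le> i)"
| "allowed_basic (FAux i, MGet) = (1 \<le> i)"
| "allowed_basic (FAux i, MSet b) = (1 \<le> i)"
| "allowed_basic (FOut, MSet b) = True"
| "allowed_basic _ = False"

fun instr_ok :: "instr \<Rightarrow> bool" where
  "instr_ok (Plain a) = allowed_basic a"
| "instr_ok (PosTest a) = allowed_basic a"
| "instr_ok (NegTest a) = allowed_basic a"
| "instr_ok (Jump l) = True"
| "instr_ok Term = True"

definition IS_br :: "instr list set" where
  "IS_br = {X. X \<noteq> [] \<and> (\<forall>u \<in> set X. instr_ok u)}"

text \<open>A Boolean function on B^n is represented as a predicate on bool lists,
  only its values on lists of length n mattering.\<close>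
definition computes :: "instr list \<Rightarrow> nat \<Rightarrow> (bool list \<Rightarrow> bool) \<Rightarrow> bool" where
  "computes X n f \<longleftrightarrow>
     (\<forall>w. length w = n \<longrightarrow> terminates X w 1 (\<lambda>_. False, False) (f w))"

definition P_lis :: "(nat \<Rightarrow> bool list \<Rightarrow> bool) set" where
  "P_lis = {F. \<exists>h :: nat poly. \<forall>n. \<exists>X. X \<in> IS_br \<and> computes X n (F n) \<and> length X \<le> poly h n}"

definition lang_of :: "(nat \<Rightarrow> bool list \<Rightarrow> bool) \<Rightarrow> bool list set" where
  "lang_of F = {w. F (length w) w}"

text \<open>A circuit over basis {const, not, and, or} (fan-in at most 2) is a list of
  gates; gate k may refer to inputs (0-based) and to earlier gates i < k.\<close>
datatype gate = GIn nat | GConst bool | GNot nat | GAnd nat nat | GOr nat nat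

fun gate_val :: "bool list \<Rightarrow> bool list \<Rightarrow> gate \<Rightarrow> bool" where
  "gate_val w vs (GIn j) = w ! j"
| "gate_val w vs (GConst b) = b"
| "gate_val w vs (GNot i) = (\<not> vs ! i)"
| "gate_val w vs (GAnd i j) = (vs ! i \<and> vs ! j)"
| "gate_val w vs (GOr i j) = (vs ! i \<or> vs ! j)"

fun gate_ok :: "nat \<Rightarrow> nat \<Rightarrow> gate \<Rightarrow> bool" where
  "gate_ok n k (GIn j) = (j < n)"
| "gate_ok n k (GConst b) = True"
| "gate_ok n k (GNot i) = (i < k)"
| "gate_ok n k (GAnd i j) = (i < k \<and> j < k)"
| "gate_ok n k (GOr i j) = (i < k \<and> j < k)"

definition wf_circuit :: "nat \<Rightarrow> gate list \<Rightarrow> bool" where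
  "wf_circuit n C \<longleftrightarrow> C \<noteq> [] \<and> (\<forall>k < length C. gate_ok n k (C ! k))"

definition circuit_vals :: "bool list \<Rightarrow> gate list \<Rightarrow> bool list" where
  "circuit_vals w C = fold (\<lambda>g vs. vs @ [gate_val w vs g]) C []"

definition circuit_out :: "bool list \<Rightarrow> gate list \<Rightarrow> bool" where
  "circuit_out w C = last (circuit_vals w C)"

definition P_poly :: "bool list set set" where
  "P_poly = {L. \<exists>h :: nat poly. \<forall>n. \<exists>C. wf_circuit n C \<and> length C \<le> poly h n \<and>
      (\<forall>w. length w = n \<longrightarrow> (circuit_out w C \<longleftrightarrow> w \<in> L))}"

end

theory Submission
  imports Defs
begin

text \<open>
  Circuits to instruction sequences (P_poly_subset_P_lis): gate k of a circuit is
  evaluated by four instructions storing its value in aux:(k+1); three more instructions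
  copy the last gate to out. This gives length 4m + 3 for a circuit of m gates.

  Instruction sequences to circuits (P_lis_subset_P_poly): all jumps go forward, so
  execution visits every position at most once and the register state at a position j is
  a well-defined function of the input. Whether j is visited, and the contents of out and
  of the O(|X|) aux registers mentioned in X when it is, are therefore Boolean functions of
  the input ("the functions of position j"). Each of them is a disjunction, over the
  possible predecessors i < j, of a constant-size formula in the functions of position i.
  Adding these formulas position by position yields one circuit of size O(|X|^3) that
  computes all of them; the result is the disjunction of out at the visited termination
  instructions.
\<close>

section \<open>Circuits and formulas\<close>

lemma circuit_vals_snoc:
  "circuit_vals w (C @ [g]) = circuit_vals w C @ [gate_val w (circuit_vals w C) g]"
  by (simp add: circuit_vals_def)

lemma length_circuit_vals [simp]: "length (circuit_vals w C) = length C"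
  by (induction C rule: rev_induct) (simp_all add: circuit_vals_snoc, simp add: circuit_vals_def)

lemma circuit_vals_take:
  "k \<le> length C \<Longrightarrow> take k (circuit_vals w C) = circuit_vals w (take k C)"
proof (induction C arbitrary: k rule: rev_induct)
  case Nil
  then show ?case by (simp add: circuit_vals_def)
next
  case (snoc g C)
  then show ?case
    by (cases "k \<le> length C") (simp_all add: circuit_vals_snoc)
qed

lemma circuit_vals_gate:
  assumes "k < length C"
  shows "circuit_vals w C ! k = gate_val w (take k (circuit_vals w C)) (C ! k)"
proof -
  have "circuit_vals w C ! k = circuit_vals w (take (Suc k) C) ! k"
    using assms circuit_vals_take[of "Suc k" C w] by (metis Suc_leI lessI nth_take)
  also have "\<dots> = gate_val w (circuit_vals w (take k C)) (C ! k)"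
    using assms by (simp add: take_Suc_conv_app_nth circuit_vals_snoc nth_append)
  finally show ?thesis
    using assms by (simp add: circuit_vals_take)
qed

definition computes_at :: "gate list \<Rightarrow> nat \<Rightarrow> nat \<Rightarrow> (bool list \<Rightarrow> bool) \<Rightarrow> bool" where
  "computes_at C n p f \<longleftrightarrow> p < length C \<and> (\<forall>w. length w = n \<longrightarrow> circuit_vals w C ! p = f w)"

definition small_circuit :: "nat \<Rightarrow> nat \<Rightarrow> (bool list \<Rightarrow> bool) set \<Rightarrow> bool" where
  "small_circuit n m S \<longleftrightarrow> (\<exists>C. length C \<le> m \<and> (\<forall>k<length C. gate_ok n k (C ! k)) \<and>
     (\<forall>f\<in>S. \<exists>p. computes_at C n p f))"

lemma small_circuit_empty: "small_circuit n 0 {}"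
  unfolding small_circuit_def by (intro exI[of _ "[]"]) simp

lemma small_circuit_mono:
  "small_circuit n m S \<Longrightarrow> m \<le> m' \<Longrightarrow> S' \<subseteq> S \<Longrightarrow> small_circuit n m' S'"
  unfolding small_circuit_def by (meson order_trans subsetD)

lemma computes_at_snoc:
  "computes_at C n p f \<Longrightarrow> computes_at (C @ [g]) n p f"
  by (simp add: computes_at_def circuit_vals_snoc nth_append)

lemma small_circuit_cong:
  assumes "small_circuit n m (insert f S)" "\<forall>w. length w = n \<longrightarrow> f w = g w"
  shows "small_circuit n m (insert g S)"
proof -
  have "computes_at C n p f \<Longrightarrow> computes_at C n p g" for C p
    using assms(2) by (simp add: computes_at_def)
  then show ?thesis using assms(1) unfolding small_circuit_def by blast
qed

lemma small_circuit_add_gate: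
  assumes S: "small_circuit n m S"
    and gate: "\<And>C. \<forall>f\<in>S. \<exists>p. computes_at C n p f \<Longrightarrow>
       \<exists>g. gate_ok n (length C) g \<and> (\<forall>w. length w = n \<longrightarrow> gate_val w (circuit_vals w C) g = h w)"
  shows "small_circuit n (Suc m) (insert h S)"
proof -
  obtain C where C: "length C \<le> m" "\<forall>k<length C. gate_ok n k (C ! k)"
    "\<forall>f\<in>S. \<exists>p. computes_at C n p f"
    using S unfolding small_circuit_def by blast
  obtain g where g: "gate_ok n (length C) g"
    "\<forall>w. length w = n \<longrightarrow> gate_val w (circuit_vals w C) g = h w"
    using gate[OF C(3)] by blast
  have "\<forall>k<length (C @ [g]). gate_ok n k ((C @ [g]) ! k)"
    using C(2) g(1) by (auto simp: nth_append less_Suc_eq)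
  moreover have "computes_at (C @ [g]) n (length C) h"
    using g(2) by (simp add: computes_at_def circuit_vals_snoc nth_append)
  moreover have "\<forall>f\<in>S. \<exists>p. computes_at (C @ [g]) n p f"
    using C(3) computes_at_snoc by blast
  ultimately show ?thesis
    unfolding small_circuit_def using C(1) by (intro exI[of _ "C @ [g]"]) auto
qed

lemma small_circuit_input:
  "small_circuit n m S \<Longrightarrow> j < n \<Longrightarrow> small_circuit n (Suc m) (insert (\<lambda>w. w ! j) S)"
  by (erule small_circuit_add_gate, intro exI[of _ "GIn j"]) simp

lemma small_circuit_const:
  "small_circuit n m S \<Longrightarrow> small_circuit n (Suc m) (insert (\<lambda>w. b) S)"
  by (erule small_circuit_add_gate, intro exI[of _ "GConst b"]) simp

lemma small_circuit_not:
  assumes "small_circuit n m S" "f \<in> S"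
  shows "small_circuit n (Suc m) (insert (\<lambda>w. \<not> f w) S)"
  using assms(1)
proof (rule small_circuit_add_gate)
  fix C assume "\<forall>f\<in>S. \<exists>p. computes_at C n p f"
  then obtain p where "computes_at C n p f" using assms(2) by blast
  then show "\<exists>g. gate_ok n (length C) g \<and>
      (\<forall>w. length w = n \<longrightarrow> gate_val w (circuit_vals w C) g = (\<not> f w))"
    by (intro exI[of _ "GNot p"]) (simp add: computes_at_def)
qed

lemma small_circuit_and:
  assumes "small_circuit n m S" "f \<in> S" "g \<in> S"
  shows "small_circuit n (Suc m) (insert (\<lambda>w. f w \<and> g w) S)"
  using assms(1)
proof (rule small_circuit_add_gate)
  fix C assume "\<forall>f\<in>S. \<exists>p. computes_at C n p f"
  then obtain p q where "computes_at C n p f" "computes_at C n q g" using assms(2,3) by blast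
  then show "\<exists>a. gate_ok n (length C) a \<and>
      (\<forall>w. length w = n \<longrightarrow> gate_val w (circuit_vals w C) a = (f w \<and> g w))"
    by (intro exI[of _ "GAnd p q"]) (simp add: computes_at_def)
qed

lemma small_circuit_or:
  assumes "small_circuit n m S" "f \<in> S" "g \<in> S"
  shows "small_circuit n (Suc m) (insert (\<lambda>w. f w \<or> g w) S)"
  using assms(1)
proof (rule small_circuit_add_gate)
  fix C assume "\<forall>f\<in>S. \<exists>p. computes_at C n p f"
  then obtain p q where "computes_at C n p f" "computes_at C n q g" using assms(2,3) by blast
  then show "\<exists>a. gate_ok n (length C) a \<and>
      (\<forall>w. length w = n \<longrightarrow> gate_val w (circuit_vals w C) a = (f w \<or> g w))"
    by (intro exI[of _ "GOr p q"]) (simp add: computes_at_def)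
qed

lemma small_circuit_output:
  assumes "small_circuit n m S" "f \<in> S"
  shows "\<exists>C. wf_circuit n C \<and> length C \<le> Suc m \<and> (\<forall>w. length w = n \<longrightarrow> circuit_out w C = f w)"
proof -
  obtain C where C: "length C \<le> m" "\<forall>k<length C. gate_ok n k (C ! k)"
    "\<forall>g\<in>S. \<exists>p. computes_at C n p g"
    using assms(1) unfolding small_circuit_def by blast
  obtain p where p: "computes_at C n p f" using C(3) assms(2) by blast
  define C' where "C' = C @ [GOr p p]"
  have "wf_circuit n C'"
    using C(2) p by (auto simp: wf_circuit_def C'_def computes_at_def nth_append less_Suc_eq)
  moreover have "\<forall>w. length w = n \<longrightarrow> circuit_out w C' = f w"
    using p by (simp add: C'_def circuit_out_def circuit_vals_snoc computes_at_def)
  ultimately show ?thesis using C(1) by (intro exI[of _ C']) (simp add: C'_def)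
qed

text \<open>Boolean formulas whose leaves are inputs, constants, or atoms: functions assumed
  to be computed already. A formula of size s adds at most s gates.\<close>
datatype form = Atom "bool list \<Rightarrow> bool" | Inp nat | Cst bool | Neg form | Conj form form | Disj form form

fun fval :: "form \<Rightarrow> bool list \<Rightarrow> bool" where
  "fval (Atom f) w = f w"
| "fval (Inp j) w = w ! j"
| "fval (Cst b) w = b"
| "fval (Neg e) w = (\<not> fval e w)"
| "fval (Conj a b) w = (fval a w \<and> fval b w)"
| "fval (Disj a b) w = (fval a w \<or> fval b w)"

fun atoms :: "form \<Rightarrow> (bool list \<Rightarrow> bool) set" where
  "atoms (Atom f) = {f}"
| "atoms (Neg e) = atoms e"
| "atoms (Conj a b) = atoms a \<union> atoms b"
| "atoms (Disj a b) = atoms a \<union> atoms b"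
| "atoms _ = {}"

fun inputs_below :: "nat \<Rightarrow> form \<Rightarrow> bool" where
  "inputs_below n (Inp j) = (j < n)"
| "inputs_below n (Neg e) = inputs_below n e"
| "inputs_below n (Conj a b) = (inputs_below n a \<and> inputs_below n b)"
| "inputs_below n (Disj a b) = (inputs_below n a \<and> inputs_below n b)"
| "inputs_below n _ = True"

fun fsize :: "form \<Rightarrow> nat" where
  "fsize (Neg e) = Suc (fsize e)"
| "fsize (Conj a b) = Suc (fsize a + fsize b)"
| "fsize (Disj a b) = Suc (fsize a + fsize b)"
| "fsize _ = 1"

lemma small_circuit_form:
  "small_circuit n m S \<Longrightarrow> atoms e \<subseteq> S \<Longrightarrow> inputs_below n e \<Longrightarrow>
   small_circuit n (m + fsize e) (insert (fval e) S)"
proof (induction e arbitrary: m S)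
  case (Atom f)
  then show ?case
    by (auto simp: insert_absorb elim: small_circuit_mono)
next
  case (Inp j)
  then show ?case using small_circuit_input[of n m S j] by simp
next
  case (Cst b)
  then show ?case using small_circuit_const[of n m S b] by simp
next
  case (Neg e)
  then have "small_circuit n (m + fsize e) (insert (fval e) S)" by simp
  from small_circuit_not[OF this insertI1] show ?case
    by (auto elim: small_circuit_mono)
next
  case (Conj a b)
  have "small_circuit n (m + fsize a) (insert (fval a) S)"
    using Conj.IH(1) Conj.prems by simp
  then have "small_circuit n (m + fsize a + fsize b) (insert (fval b) (insert (fval a) S))"
    using Conj.IH(2) Conj.prems by auto
  from small_circuit_and[OF this, of "fval a" "fval b"] show ?case
    by (auto elim: small_circuit_mono)
next
  case (Disj a b)
  have "small_circuit n (m + fsize a) (insert (fval a) S)"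
    using Disj.IH(1) Disj.prems by simp
  then have "small_circuit n (m + fsize a + fsize b) (insert (fval b) (insert (fval a) S))"
    using Disj.IH(2) Disj.prems by auto
  from small_circuit_or[OF this, of "fval a" "fval b"] show ?case
    by (auto elim: small_circuit_mono)
qed

definition expressible :: "nat \<Rightarrow> (bool list \<Rightarrow> bool) set \<Rightarrow> nat \<Rightarrow> (bool list \<Rightarrow> bool) \<Rightarrow> bool" where
  "expressible n S c f \<longleftrightarrow>
     (\<exists>e. atoms e \<subseteq> S \<and> inputs_below n e \<and> fsize e \<le> c \<and> (\<forall>w. length w = n \<longrightarrow> fval e w = f w))"

lemma expressibleI:
  "atoms e \<subseteq> S \<Longrightarrow> inputs_below n e \<Longrightarrow> fsize e \<le> c \<Longrightarrow> (\<And>w. length w = n \<Longrightarrow> fval e w = f w) \<Longrightarrow>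
   expressible n S c f"
  unfolding expressible_def by blast

lemma expressible_mono: "expressible n S c f \<Longrightarrow> S \<subseteq> S' \<Longrightarrow> expressible n S' c f"
  unfolding expressible_def by blast

lemma small_circuit_expressible:
  assumes "small_circuit n m S" "expressible n S c f"
  shows "small_circuit n (m + c) (insert f S)"
proof -
  obtain e where e: "atoms e \<subseteq> S" "inputs_below n e" "fsize e \<le> c"
    "\<forall>w. length w = n \<longrightarrow> fval e w = f w"
    using assms(2) unfolding expressible_def by blast
  show ?thesis
  proof (rule small_circuit_cong[OF _ e(4)])
    show "small_circuit n (m + c) (insert (fval e) S)"
      by (rule small_circuit_mono[OF small_circuit_form[OF assms(1) e(1,2)]]) (use e(3) in simp_all)
  qed
qed

lemma small_circuit_expressible_list:
  "small_circuit n m S \<Longrightarrow> \<forall>f\<in>set fs. expressible n S c f \<Longrightarrow>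
   small_circuit n (m + length fs * c) (S \<union> set fs)"
proof (induction fs arbitrary: m S)
  case Nil
  then show ?case by simp
next
  case (Cons f fs)
  then have "small_circuit n (m + c) (insert f S)"
    by (simp add: small_circuit_expressible)
  moreover have "\<forall>g\<in>set fs. expressible n (insert f S) c g"
    using Cons.prems(2) by (auto elim: expressible_mono)
  ultimately have "small_circuit n (m + c + length fs * c) (insert f S \<union> set fs)"
    by (rule Cons.IH)
  then show ?case by (simp add: add.assoc)
qed

fun Disjs :: "form list \<Rightarrow> form" where
  "Disjs [] = Cst False"
| "Disjs (e # es) = Disj e (Disjs es)"

lemma fval_Disjs: "fval (Disjs es) w = (\<exists>e\<in>set es. fval e w)"
  by (induction es) auto

lemma atoms_Disjs: "atoms (Disjs es) = (\<Union>e\<in>set es. atoms e)"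
  by (induction es) auto

lemma inputs_below_Disjs: "inputs_below n (Disjs es) = (\<forall>e\<in>set es. inputs_below n e)"
  by (induction es) auto

lemma fsize_Disjs: "\<forall>e\<in>set es. fsize e \<le> c \<Longrightarrow> fsize (Disjs es) \<le> Suc (length es * Suc c)"
  by (induction es) auto

section \<open>Execution as iteration of a step function\<close>

fun step :: "instr list \<Rightarrow> bool list \<Rightarrow> nat \<times> regs \<Rightarrow> (nat \<times> regs) option" where
  "step X w (i, s) = (if 1 \<le> i \<and> i \<le> length X then (case X ! (i - 1) of
      Term \<Rightarrow> None
    | Jump l \<Rightarrow> if l = 0 then None else Some (i + l, s)
    | Plain a \<Rightarrow> (case exec_basic w a s of None \<Rightarrow> None | Some (rep, s') \<Rightarrow> Some (i + 1, s'))
    | PosTest a \<Rightarrow> (case exec_basic w a s of None \<Rightarrow> None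
         | Some (rep, s') \<Rightarrow> Some (if rep then i + 1 else i + 2, s'))
    | NegTest a \<Rightarrow> (case exec_basic w a s of None \<Rightarrow> None
         | Some (rep, s') \<Rightarrow> Some (if rep then i + 2 else i + 1, s'))) else None)"

lemma step_terminates:
  "step X w (i, s) = Some (j, s') \<Longrightarrow> terminates X w j s' r \<Longrightarrow> terminates X w i s r"
  by (simp split: if_splits instr.splits option.splits prod.splits)
    (auto intro: terminates.intros)

lemma step_increases: "step X w (i, s) = Some (j, s') \<Longrightarrow> i < j \<and> 1 \<le> i \<and> i \<le> length X"
  by (simp split: if_splits instr.splits option.splits prod.splits)

declare step.simps [simp del]

definition halt_at :: "instr list \<Rightarrow> nat \<Rightarrow> bool" where
  "halt_at X j \<longleftrightarrow> 1 \<le> j \<and> j \<le> length X \<and> X ! (j - 1) = Term"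

lemma step_halt_at: "halt_at X j \<Longrightarrow> step X w (j, s) = None"
  by (simp add: halt_at_def step.simps)

fun run :: "instr list \<Rightarrow> bool list \<Rightarrow> nat \<times> regs \<Rightarrow> nat \<Rightarrow> (nat \<times> regs) option" where
  "run X w c 0 = Some c"
| "run X w c (Suc t) = Option.bind (run X w c t) (step X w)"

lemma run_step_first: "step X w c = Some c' \<Longrightarrow> run X w c (Suc t) = run X w c' t"
  by (induction t) auto

lemma run_SucD:
  "run X w c (Suc t) = Some (j, s') \<Longrightarrow> \<exists>i s. run X w c t = Some (i, s) \<and> step X w (i, s) = Some (j, s')"
  by (cases "run X w c t") auto

definition halts_with :: "instr list \<Rightarrow> bool list \<Rightarrow> nat \<times> regs \<Rightarrow> bool \<Rightarrow> bool" where
  "halts_with X w c r \<longleftrightarrow> (\<exists>t j s. run X w c t = Some (j, s) \<and> halt_at X j \<and> r = snd s)"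

lemma halts_with_step:
  assumes "step X w c = Some c'" "halts_with X w c' r"
  shows "halts_with X w c r"
proof -
  obtain t j s where "run X w c' t = Some (j, s)" "halt_at X j" "r = snd s"
    using assms(2) unfolding halts_with_def by blast
  moreover from this(1) have "run X w c (Suc t) = Some (j, s)"
    using run_step_first[OF assms(1)] by simp
  ultimately show ?thesis unfolding halts_with_def by blast
qed

lemma terminates_halts_with: "terminates X w i s r \<Longrightarrow> halts_with X w (i, s) r"
proof (induction rule: terminates.induct)
  case (halt i s)
  have "run X w (i, s) 0 = Some (i, s)" by simp
  with halt show ?case unfolding halts_with_def halt_at_def by blast
next
  case (jump i l s r)
  show ?case by (rule halts_with_step[OF _ jump.IH]) (use jump in \<open>simp add: step.simps\<close>)
next
  case (plain i a s rep s' r)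
  show ?case by (rule halts_with_step[OF _ plain.IH]) (use plain in \<open>simp add: step.simps\<close>)
next
  case (pos i a s rep s' r)
  show ?case by (rule halts_with_step[OF _ pos.IH]) (use pos in \<open>simp add: step.simps\<close>)
next
  case (neg i a s rep s' r)
  show ?case by (rule halts_with_step[OF _ neg.IH]) (use neg in \<open>simp add: step.simps\<close>)
qed

text \<open>Determinism with a strictly increasing counter: each position is visited at most once.\<close>
lemma run_counter_increases:
  "run X w c t' = Some (j, s') \<Longrightarrow> run X w c t = Some (i, s) \<Longrightarrow> t < t' \<Longrightarrow> i < j"
proof (induction t' arbitrary: j s')
  case 0
  then show ?case by simp
next
  case (Suc t')
  obtain i' s'' where prev: "run X w c t' = Some (i', s'')" "step X w (i', s'') = Some (j, s')"
    using run_SucD[OF Suc.prems(1)] by blast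
  have "i' < j" using step_increases[OF prev(2)] by simp
  moreover have "i \<le> i'"
    using Suc.prems(2,3) prev(1) Suc.IH[OF prev(1) Suc.prems(2)] by (cases "t = t'") auto
  ultimately show ?case by simp
qed

lemma run_counter_inj:
  assumes "run X w c t = Some (i, s)" "run X w c t' = Some (i, s')"
  shows "t = t'"
proof (rule ccontr)
  assume "t \<noteq> t'"
  then have "t < t' \<or> t' < t" by arith
  then show False
    using run_counter_increases[OF assms(2,1)] run_counter_increases[OF assms(1,2)] by auto
qed

lemma run_None_mono: "run X w c t = None \<Longrightarrow> t \<le> t' \<Longrightarrow> run X w c t' = None"
  by (induction t') (auto simp: le_Suc_eq)

section \<open>The state at each position as a function of the input\<close>

definition init :: regs where "init = (\<lambda>_. False, False)"

definition visits :: "instr list \<Rightarrow> bool list \<Rightarrow> nat \<Rightarrow> regs \<Rightarrow> bool" where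
  "visits X w j s \<longleftrightarrow> (\<exists>t. run X w (1, init) t = Some (j, s))"

lemma visits_unique:
  assumes "visits X w j s" "visits X w j s'"
  shows "s = s'"
proof -
  obtain t t' where run: "run X w (1, init) t = Some (j, s)" "run X w (1, init) t' = Some (j, s')"
    using assms unfolding visits_def by blast
  then have "t = t'" by (rule run_counter_inj)
  then show ?thesis using run by simp
qed

definition visited :: "instr list \<Rightarrow> nat \<Rightarrow> bool list \<Rightarrow> bool" where
  "visited X j w \<longleftrightarrow> (\<exists>s. visits X w j s)"

definition aux_at :: "instr list \<Rightarrow> nat \<Rightarrow> nat \<Rightarrow> bool list \<Rightarrow> bool" where
  "aux_at X j r w \<longleftrightarrow> (\<exists>s. visits X w j s \<and> fst s r)"

definition out_at :: "instr list \<Rightarrow> nat \<Rightarrow> bool list \<Rightarrow> bool" where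
  "out_at X j w \<longleftrightarrow> (\<exists>s. visits X w j s \<and> snd s)"

definition state_at :: "instr list \<Rightarrow> bool list \<Rightarrow> nat \<Rightarrow> regs" where
  "state_at X w j = (\<lambda>r. aux_at X j r w, out_at X j w)"

lemma visits_state_at:
  assumes "visits X w j s"
  shows "s = state_at X w j"
proof -
  have "aux_at X j r w = fst s r" for r
    using assms visits_unique unfolding aux_at_def by blast
  moreover have "out_at X j w = snd s"
    using assms visits_unique unfolding out_at_def by blast
  ultimately show ?thesis unfolding state_at_def by (simp add: prod_eq_iff fun_eq_iff)
qed

lemma visits_first: "visits X w 1 s \<longleftrightarrow> s = init"
proof -
  have "visits X w 1 init" unfolding visits_def by (intro exI[of _ 0]) simp
  then show ?thesis using visits_unique by blast
qed

lemma visits_step: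
  assumes "j \<noteq> 1"
  shows "visits X w j s' \<longleftrightarrow>
    (\<exists>i. 1 \<le> i \<and> i < j \<and> visited X i w \<and> step X w (i, state_at X w i) = Some (j, s'))"
proof
  assume "visits X w j s'"
  then obtain t where t: "run X w (1, init) t = Some (j, s')" unfolding visits_def by blast
  with assms obtain t0 where "t = Suc t0" by (cases t) auto
  then obtain i s where i: "run X w (1, init) t0 = Some (i, s)" "step X w (i, s) = Some (j, s')"
    using run_SucD t by blast
  then have "visits X w i s" unfolding visits_def by blast
  then have "visited X i w" "s = state_at X w i"
    unfolding visited_def by (blast, rule visits_state_at)
  then show "\<exists>i. 1 \<le> i \<and> i < j \<and> visited X i w \<and> step X w (i, state_at X w i) = Some (j, s')"
    using i(2) step_increases[OF i(2)] by blast
next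
  assume "\<exists>i. 1 \<le> i \<and> i < j \<and> visited X i w \<and> step X w (i, state_at X w i) = Some (j, s')"
  then obtain i s where i: "visits X w i s" "step X w (i, state_at X w i) = Some (j, s')"
    unfolding visited_def by blast
  moreover obtain t where "run X w (1, init) t = Some (i, s)" using i(1) unfolding visits_def by blast
  ultimately have "run X w (1, init) (Suc t) = Some (j, s')" using visits_state_at by simp
  then show "visits X w j s'" unfolding visits_def by blast
qed

lemma terminates_result:
  assumes "terminates X w 1 init r"
  shows "r \<longleftrightarrow> (\<exists>j. halt_at X j \<and> out_at X j w)"
proof -
  obtain t j s where run: "run X w (1, init) t = Some (j, s)" "halt_at X j" "r = snd s"
    using terminates_halts_with[OF assms] unfolding halts_with_def by blast
  have "j' = j" if halt': "halt_at X j'" and vis': "visits X w j' s'" for j' s'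
  proof -
    obtain t' where run': "run X w (1, init) t' = Some (j', s')"
      using vis' unfolding visits_def by blast
    have stop: "run X w (1, init) (Suc t) = None" "run X w (1, init) (Suc t') = None"
      using run run' halt' by (simp_all add: step_halt_at)
    have "\<not> t < t'" using run_None_mono[OF stop(1), of t'] run' by auto
    moreover have "\<not> t' < t" using run_None_mono[OF stop(2), of t] run(1) by auto
    ultimately have "t = t'" by simp
    then show ?thesis using run run' by simp
  qed
  moreover have "visits X w j s" using run(1) unfolding visits_def by blast
  ultimately show ?thesis
    using run(2,3) visits_unique unfolding out_at_def by blast
qed

section \<open>One step of execution described by formulas\<close>

fun basic_ok :: "nat \<Rightarrow> basic \<Rightarrow> bool" where
  "basic_ok n (FIn m, MGet) = (1 \<le> m \<and> m \<le> n)"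
| "basic_ok n (FIn m, MSet b) = False"
| "basic_ok n _ = True"

fun reply_form :: "instr list \<Rightarrow> nat \<Rightarrow> nat \<Rightarrow> basic \<Rightarrow> form" where
  "reply_form X n i (FIn m, MGet) = (if 1 \<le> m \<and> m \<le> n then Inp (m - 1) else Cst False)"
| "reply_form X n i (FAux r, MGet) = Atom (aux_at X i r)"
| "reply_form X n i (FOut, MGet) = Atom (out_at X i)"
| "reply_form X n i (_, MSet b) = Cst b"

fun basic_effect :: "basic \<Rightarrow> regs \<Rightarrow> regs" where
  "basic_effect (FAux r, MSet b) s = ((fst s)(r := b), snd s)"
| "basic_effect (FOut, MSet b) s = (fst s, b)"
| "basic_effect a s = s"

fun instr_effect :: "instr \<Rightarrow> regs \<Rightarrow> regs" where
  "instr_effect (Plain a) s = basic_effect a s"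
| "instr_effect (PosTest a) s = basic_effect a s"
| "instr_effect (NegTest a) s = basic_effect a s"
| "instr_effect u s = s"

lemma exec_basic_state_at:
  "length w = n \<Longrightarrow> exec_basic w a (state_at X w i) =
   (if basic_ok n a then Some (fval (reply_form X n i a) w, basic_effect a (state_at X w i)) else None)"
  by (cases "fst a"; cases "snd a"; cases a) (auto simp: state_at_def)

fun guard :: "instr list \<Rightarrow> nat \<Rightarrow> nat \<Rightarrow> nat \<Rightarrow> instr \<Rightarrow> form" where
  "guard X n i j Term = Cst False"
| "guard X n i j (Jump l) = Cst (l \<noteq> 0 \<and> j = i + l)"
| "guard X n i j (Plain a) = Cst (basic_ok n a \<and> j = i + 1)"
| "guard X n i j (PosTest a) = (if basic_ok n a then (if j = i + 1 then reply_form X n i a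
      else if j = i + 2 then Neg (reply_form X n i a) else Cst False) else Cst False)"
| "guard X n i j (NegTest a) = (if basic_ok n a then (if j = i + 2 then reply_form X n i a
      else if j = i + 1 then Neg (reply_form X n i a) else Cst False) else Cst False)"

lemma step_state_at:
  "length w = n \<Longrightarrow> 1 \<le> i \<Longrightarrow> i \<le> length X \<Longrightarrow>
   step X w (i, state_at X w i) = Some (j, s') \<longleftrightarrow>
   fval (guard X n i j (X ! (i - 1))) w \<and> s' = instr_effect (X ! (i - 1)) (state_at X w i)"
  by (cases "X ! (i - 1)") (auto simp: step.simps exec_basic_state_at)

fun aux_basic_form :: "instr list \<Rightarrow> nat \<Rightarrow> nat \<Rightarrow> basic \<Rightarrow> form" where
  "aux_basic_form X i r (FAux r', MSet b) = (if r' = r then Cst b else Atom (aux_at X i r))"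
| "aux_basic_form X i r a = Atom (aux_at X i r)"

fun aux_form :: "instr list \<Rightarrow> nat \<Rightarrow> nat \<Rightarrow> instr \<Rightarrow> form" where
  "aux_form X i r (Plain a) = aux_basic_form X i r a"
| "aux_form X i r (PosTest a) = aux_basic_form X i r a"
| "aux_form X i r (NegTest a) = aux_basic_form X i r a"
| "aux_form X i r u = Atom (aux_at X i r)"

fun out_basic_form :: "instr list \<Rightarrow> nat \<Rightarrow> basic \<Rightarrow> form" where
  "out_basic_form X i (FOut, MSet b) = Cst b"
| "out_basic_form X i a = Atom (out_at X i)"

fun out_form :: "instr list \<Rightarrow> nat \<Rightarrow> instr \<Rightarrow> form" where
  "out_form X i (Plain a) = out_basic_form X i a"
| "out_form X i (PosTest a) = out_basic_form X i a"
| "out_form X i (NegTest a) = out_basic_form X i a"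
| "out_form X i u = Atom (out_at X i)"

lemma fval_aux_form: "fval (aux_form X i r u) w = fst (instr_effect u (state_at X w i)) r"
proof -
  have "fval (aux_basic_form X i r a) w = fst (basic_effect a (state_at X w i)) r" for a
    by (cases "fst a"; cases "snd a"; cases a) (auto simp: state_at_def)
  then show ?thesis by (cases u) (auto simp: state_at_def)
qed

lemma fval_out_form: "fval (out_form X i u) w = snd (instr_effect u (state_at X w i))"
proof -
  have "fval (out_basic_form X i a) w = snd (basic_effect a (state_at X w i))" for a
    by (cases "fst a"; cases "snd a"; cases a) (auto simp: state_at_def)
  then show ?thesis by (cases u) (auto simp: state_at_def)
qed

section \<open>From instruction sequences to circuits\<close>

text \<open>The aux registers mentioned by an instruction and by a whole sequence; only
  these can influence execution, so only their contents are tracked as functions.\<close>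
fun basic_aux :: "basic \<Rightarrow> nat list" where
  "basic_aux (FAux r, m) = [r]"
| "basic_aux a = []"

fun instr_aux :: "instr \<Rightarrow> nat list" where
  "instr_aux (Plain a) = basic_aux a"
| "instr_aux (PosTest a) = basic_aux a"
| "instr_aux (NegTest a) = basic_aux a"
| "instr_aux u = []"

definition aux_regs :: "instr list \<Rightarrow> nat list" where
  "aux_regs X = concat (map instr_aux X)"

lemma length_instr_aux: "length (instr_aux u) \<le> 1"
proof -
  have "length (basic_aux a) \<le> 1" for a
    by (cases "fst a"; cases a) auto
  then show ?thesis by (cases u) auto
qed

lemma length_aux_regs: "length (aux_regs X) \<le> length X"
proof (induction X)
  case (Cons u X)
  then show ?case using length_instr_aux[of u] by (simp add: aux_regs_def)
qed (simp add: aux_regs_def)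

lemma atoms_reply_form:
  "atoms (reply_form X n i a) \<subseteq> insert (out_at X i) (aux_at X i ` set (basic_aux a))"
  by (cases "fst a"; cases "snd a"; cases a) auto

lemma reply_form_size: "inputs_below n (reply_form X n i a) \<and> fsize (reply_form X n i a) = 1"
  by (cases "fst a"; cases "snd a"; cases a) auto

lemma atoms_guard: "atoms (guard X n i j u) \<subseteq> insert (out_at X i) (aux_at X i ` set (instr_aux u))"
  by (cases u) (auto dest: subsetD[OF atoms_reply_form])

lemma guard_size: "inputs_below n (guard X n i j u) \<and> fsize (guard X n i j u) \<le> 2"
  by (cases u) (auto simp: reply_form_size)

lemma aux_form_props:
  "atoms (aux_form X i r u) \<subseteq> {aux_at X i r} \<and> inputs_below n (aux_form X i r u) \<and> fsize (aux_form X i r u) = 1"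
proof -
  have "atoms (aux_basic_form X i r a) \<subseteq> {aux_at X i r} \<and> inputs_below n (aux_basic_form X i r a) \<and>
      fsize (aux_basic_form X i r a) = 1" for a
    by (cases "fst a"; cases "snd a"; cases a) auto
  then show ?thesis by (cases u) auto
qed

lemma out_form_props:
  "atoms (out_form X i u) \<subseteq> {out_at X i} \<and> inputs_below n (out_form X i u) \<and> fsize (out_form X i u) = 1"
proof -
  have "atoms (out_basic_form X i a) \<subseteq> {out_at X i} \<and> inputs_below n (out_basic_form X i a) \<and>
      fsize (out_basic_form X i a) = 1" for a
    by (cases "fst a"; cases "snd a"; cases a) auto
  then show ?thesis by (cases u) auto
qed

definition level_funs :: "instr list \<Rightarrow> nat \<Rightarrow> (bool list \<Rightarrow> bool) list" where
  "level_funs X i = visited X i # out_at X i # map (aux_at X i) (aux_regs X)"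

lemma length_level_funs: "length (level_funs X i) \<le> length X + 2"
  using length_aux_regs[of X] by (simp add: level_funs_def)

definition enter_form :: "instr list \<Rightarrow> nat \<Rightarrow> nat \<Rightarrow> nat \<Rightarrow> form" where
  "enter_form X n i j = Conj (Atom (visited X i)) (guard X n i j (X ! (i - 1)))"

lemma enter_form_props:
  assumes "1 \<le> i" "i \<le> length X"
  shows "atoms (enter_form X n i j) \<subseteq> set (level_funs X i) \<and> inputs_below n (enter_form X n i j) \<and>
    fsize (enter_form X n i j) \<le> 4"
proof -
  have "X ! (i - 1) \<in> set X" using assms by simp
  then have "set (instr_aux (X ! (i - 1))) \<subseteq> set (aux_regs X)" by (auto simp: aux_regs_def)
  then show ?thesis
    using atoms_guard[of X n i j "X ! (i - 1)"] guard_size[of n X i j "X ! (i - 1)"]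
    by (auto simp: enter_form_def level_funs_def)
qed

lemma visits_predecessor:
  assumes j: "1 < j" "j \<le> length X" and w: "length w = n"
  shows "(\<exists>s'. visits X w j s' \<and> P s') \<longleftrightarrow>
    (\<exists>i\<in>{1..<j}. fval (enter_form X n i j) w \<and> P (instr_effect (X ! (i - 1)) (state_at X w i)))"
proof -
  have "visits X w j s' \<longleftrightarrow>
      (\<exists>i. 1 \<le> i \<and> i < j \<and> visited X i w \<and> step X w (i, state_at X w i) = Some (j, s'))" for s'
    using visits_step j(1) by simp
  then have "(\<exists>s'. visits X w j s' \<and> P s') \<longleftrightarrow>
      (\<exists>i\<in>{1..<j}. visited X i w \<and> (\<exists>s'. step X w (i, state_at X w i) = Some (j, s') \<and> P s'))"
    unfolding atLeastLessThan_iff Bex_def by (intro iffI; elim exE conjE; blast)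
  also have "\<dots> \<longleftrightarrow> (\<exists>i\<in>{1..<j}. visited X i w \<and>
      (fval (guard X n i j (X ! (i - 1))) w \<and> P (instr_effect (X ! (i - 1)) (state_at X w i))))"
  proof (intro bex_cong refl conj_cong)
    fix i assume "i \<in> {1..<j}"
    then show "(\<exists>s'. step X w (i, state_at X w i) = Some (j, s') \<and> P s') \<longleftrightarrow>
        fval (guard X n i j (X ! (i - 1))) w \<and> P (instr_effect (X ! (i - 1)) (state_at X w i))"
      using step_state_at[OF w, of i X j] j(2) by auto
  qed
  finally show ?thesis by (simp add: enter_form_def conj_assoc)
qed

lemma expressible_visits:
  assumes j: "1 < j" "j \<le> length X"
    and pe: "\<And>i. i \<in> {1..<j} \<Longrightarrow>
      atoms (pe i) \<subseteq> set (level_funs X i) \<and> inputs_below n (pe i) \<and> fsize (pe i) \<le> 1"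
    and pe_val: "\<And>i w. i \<in> {1..<j} \<Longrightarrow> length w = n \<Longrightarrow>
      fval (pe i) w = P (instr_effect (X ! (i - 1)) (state_at X w i))"
  shows "expressible n (\<Union>i\<in>{1..<j}. set (level_funs X i)) (Suc (length X * 7))
    (\<lambda>w. \<exists>s'. visits X w j s' \<and> P s')"
proof -
  define es where "es = map (\<lambda>i. Conj (enter_form X n i j) (pe i)) [1..<j]"
  have parts: "atoms e \<subseteq> (\<Union>i\<in>{1..<j}. set (level_funs X i)) \<and> inputs_below n e \<and> fsize e \<le> 6"
    if "e \<in> set es" for e
  proof -
    have "e \<in> (\<lambda>i. Conj (enter_form X n i j) (pe i)) ` {1..<j}"
      using that by (simp add: es_def)
    then obtain i where i: "i \<in> {1..<j}" "e = Conj (enter_form X n i j) (pe i)"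
      by blast
    then have "1 \<le> i" "i \<le> length X" using j by auto
    from enter_form_props[OF this, of n j] pe[OF i(1)] i show ?thesis by auto
  qed
  show ?thesis
  proof (rule expressibleI[of "Disjs es"])
    show "atoms (Disjs es) \<subseteq> (\<Union>i\<in>{1..<j}. set (level_funs X i))"
      using parts by (auto simp: atoms_Disjs)
    show "inputs_below n (Disjs es)"
      using parts by (simp add: inputs_below_Disjs)
    have "fsize (Disjs es) \<le> Suc (length es * Suc 6)"
      using parts by (intro fsize_Disjs) auto
    also have "\<dots> \<le> Suc (length X * 7)"
      using j(2) by (simp add: es_def)
    finally show "fsize (Disjs es) \<le> Suc (length X * 7)" .
    fix w :: "bool list" assume w: "length w = n"
    have "fval (Disjs es) w \<longleftrightarrow>
        (\<exists>i\<in>{1..<j}. fval (enter_form X n i j) w \<and> P (instr_effect (X ! (i - 1)) (state_at X w i)))"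
      using pe_val[OF _ w] by (auto simp: es_def fval_Disjs)
    also have "\<dots> \<longleftrightarrow> (\<exists>s'. visits X w j s' \<and> P s')"
      using visits_predecessor[OF j w] by simp
    finally show "fval (Disjs es) w = (\<exists>s'. visits X w j s' \<and> P s')" .
  qed
qed

lemma expressible_level_funs:
  assumes j: "1 \<le> j" "j \<le> length X" and f: "f \<in> set (level_funs X j)"
  shows "expressible n (\<Union>i\<in>{1..<j}. set (level_funs X i)) (Suc (length X * 7)) f"
proof (cases "j = 1")
  case True
  have "visited X 1 = (\<lambda>w. True)" "out_at X 1 = (\<lambda>w. False)" "aux_at X 1 r = (\<lambda>w. False)" for r
    using visits_first by (auto simp: visited_def out_at_def aux_at_def init_def fun_eq_iff)
  then obtain b where "f = (\<lambda>w. b)" using f True by (auto simp: level_funs_def)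
  then show ?thesis by (intro expressibleI[of "Cst b"]) auto
next
  case False
  then have j': "1 < j" "j \<le> length X" using j by auto
  consider "f = visited X j" | "f = out_at X j" | r where "r \<in> set (aux_regs X)" "f = aux_at X j r"
    using f by (auto simp: level_funs_def)
  then show ?thesis
  proof cases
    case 1
    then have "f = (\<lambda>w. \<exists>s'. visits X w j s' \<and> True)" by (simp add: visited_def fun_eq_iff)
    then show ?thesis
      by (simp only:) (rule expressible_visits[OF j', of "\<lambda>_. Cst True"], simp_all)
  next
    case 2
    then have "f = (\<lambda>w. \<exists>s'. visits X w j s' \<and> snd s')" by (simp add: out_at_def fun_eq_iff)
    moreover have "atoms (out_form X i u) \<subseteq> set (level_funs X i)" for i u
      using out_form_props[of X i u n] by (auto simp: level_funs_def)
    ultimately show ?thesis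
      using out_form_props
      by (simp only:) (rule expressible_visits[OF j', of "\<lambda>i. out_form X i (X ! (i - 1))"],
          auto simp: fval_out_form)
  next
    case 3
    then have "f = (\<lambda>w. \<exists>s'. visits X w j s' \<and> fst s' r)" by (simp add: aux_at_def fun_eq_iff)
    moreover have "atoms (aux_form X i r u) \<subseteq> set (level_funs X i)" for i u
      using aux_form_props[of X i r u n] 3(1) by (auto simp: level_funs_def)
    ultimately show ?thesis
      using aux_form_props
      by (simp only:) (rule expressible_visits[OF j', of "\<lambda>i. aux_form X i r (X ! (i - 1))"],
          auto simp: fval_aux_form)
  qed
qed

lemma small_circuit_levels:
  "j \<le> length X \<Longrightarrow>
   small_circuit n (j * ((length X + 2) * Suc (length X * 7))) (\<Union>i\<in>{1..j}. set (level_funs X i))"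
proof (induction j)
  case 0
  then show ?case using small_circuit_empty by simp
next
  case (Suc j)
  define c where "c = Suc (length X * 7)"
  have "\<forall>f\<in>set (level_funs X (Suc j)). expressible n (\<Union>i\<in>{1..j}. set (level_funs X i)) c f"
    using expressible_level_funs[of "Suc j" X] Suc.prems
    by (simp add: c_def atLeastLessThanSuc_atLeastAtMost)
  moreover have "small_circuit n (j * ((length X + 2) * c)) (\<Union>i\<in>{1..j}. set (level_funs X i))"
    using Suc by (simp add: c_def)
  ultimately have "small_circuit n (j * ((length X + 2) * c) + length (level_funs X (Suc j)) * c)
     ((\<Union>i\<in>{1..j}. set (level_funs X i)) \<union> set (level_funs X (Suc j)))"
    using small_circuit_expressible_list by blast
  moreover have "j * ((length X + 2) * c) + length (level_funs X (Suc j)) * c \<le> Suc j * ((length X + 2) * c)"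
    using mult_le_mono1[OF length_level_funs[of X "Suc j"], of c] by simp
  moreover have "(\<Union>i\<in>{1..Suc j}. set (level_funs X i)) \<subseteq>
      (\<Union>i\<in>{1..j}. set (level_funs X i)) \<union> set (level_funs X (Suc j))"
    by (auto simp: le_Suc_eq)
  ultimately show ?case unfolding c_def by (rule small_circuit_mono)
qed

text \<open>The size of the circuit built below: |X| levels of at most |X| + 2 formulas of
  size at most 7|X| + 1, the output formula, and one copying gate.\<close>
lemma circuit_size_bound:
  "Suc (k * ((k + 2) * Suc (k * 7)) + Suc (k * 2)) \<le> 9 * (k + 2) ^ 3"
proof -
  have "k * ((k + 2) * Suc (k * 7)) \<le> (k + 2) * ((k + 2) * (7 * (k + 2)))"
    by (intro mult_le_mono) simp_all
  also have "\<dots> = 7 * (k + 2) ^ 3"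
    by (simp add: power3_eq_cube algebra_simps)
  finally show ?thesis
    using self_le_power[of "k + 2" 3] by linarith
qed

text \<open>An instruction sequence computing g on inputs of length n yields a circuit of size
  O(|X|^3): the output is the disjunction of out_at over the termination instructions.\<close>
lemma computes_small_circuit:
  assumes comp: "computes X n g"
  shows "\<exists>C. wf_circuit n C \<and> length C \<le> 9 * (length X + 2) ^ 3 \<and>
    (\<forall>w. length w = n \<longrightarrow> circuit_out w C = g w)"
proof -
  define k where "k = length X"
  define S where "S = (\<Union>i\<in>{1..k}. set (level_funs X i))"
  define halts where "halts = filter (halt_at X) [1..<Suc k]"
  have levels: "small_circuit n (k * ((k + 2) * Suc (k * 7))) S"
    using small_circuit_levels[of k X n] by (simp add: k_def S_def)
  have "expressible n S (Suc (k * 2)) g"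
  proof (rule expressibleI[of "Disjs (map (\<lambda>j. Atom (out_at X j)) halts)"])
    show "atoms (Disjs (map (\<lambda>j. Atom (out_at X j)) halts)) \<subseteq> S"
      by (force simp: atoms_Disjs S_def halts_def level_funs_def)
    show "inputs_below n (Disjs (map (\<lambda>j. Atom (out_at X j)) halts))"
      by (simp add: inputs_below_Disjs)
    have "length halts \<le> k"
      unfolding halts_def by (metis length_filter_le length_upt diff_Suc_1)
    then show "fsize (Disjs (map (\<lambda>j. Atom (out_at X j)) halts)) \<le> Suc (k * 2)"
      using fsize_Disjs[of "map (\<lambda>j. Atom (out_at X j)) halts" 1] by simp
    fix w :: "bool list" assume "length w = n"
    then have "terminates X w 1 init (g w)" using comp by (simp add: computes_def init_def)
    then have "g w \<longleftrightarrow> (\<exists>j. halt_at X j \<and> out_at X j w)"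
      by (rule terminates_result)
    also have "\<dots> \<longleftrightarrow> (\<exists>j\<in>set halts. out_at X j w)"
      by (auto simp: halts_def k_def halt_at_def less_Suc_eq_le)
    finally show "fval (Disjs (map (\<lambda>j. Atom (out_at X j)) halts)) w = g w"
      by (simp add: fval_Disjs)
  qed
  from small_circuit_output[OF small_circuit_expressible[OF levels this]]
  obtain C where "wf_circuit n C" "length C \<le> Suc (k * ((k + 2) * Suc (k * 7)) + Suc (k * 2))"
    "\<forall>w. length w = n \<longrightarrow> circuit_out w C = g w"
    by blast
  then show ?thesis using circuit_size_bound[of k] unfolding k_def by (meson order_trans)
qed

lemma P_lis_subset_P_poly: "lang_of ` P_lis \<subseteq> P_poly"
proof
  fix L assume "L \<in> lang_of ` P_lis"
  then obtain F h where L: "L = lang_of F"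
    and h: "\<forall>n. \<exists>X. X \<in> IS_br \<and> computes X n (F n) \<and> length X \<le> poly h n"
    by (auto simp: P_lis_def)
  define h' where "h' = smult 9 ((h + [:2:]) ^ 3)"
  have "\<exists>C. wf_circuit n C \<and> length C \<le> poly h' n \<and> (\<forall>w. length w = n \<longrightarrow> (circuit_out w C \<longleftrightarrow> w \<in> L))"
    for n
  proof -
    obtain X where X: "computes X n (F n)" "length X \<le> poly h n" using h by blast
    obtain C where C: "wf_circuit n C" "length C \<le> 9 * (length X + 2) ^ 3"
      "\<forall>w. length w = n \<longrightarrow> circuit_out w C = F n w"
      using computes_small_circuit[OF X(1)] by blast
    have "9 * (length X + 2) ^ 3 \<le> poly h' n"
      using X(2) by (simp add: h'_def poly_power power_mono)
    then show ?thesis using C by (auto simp: L lang_of_def)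
  qed
  then show "L \<in> P_poly" unfolding P_poly_def by blast
qed

section \<open>From circuits to instruction sequences\<close>

text \<open>Gate k of a circuit is evaluated by four instructions that store its value in
  the register aux:(k+1), which is initially False and is only ever set to True.\<close>
definition gate_code :: "nat \<Rightarrow> gate \<Rightarrow> instr list" where
  "gate_code k g = (case g of
     GIn j \<Rightarrow> [PosTest (FIn (j + 1), MGet), Plain (FAux (k + 1), MSet True), Jump 1, Jump 1]
   | GConst b \<Rightarrow> [Plain (FAux (k + 1), MSet b), Jump 1, Jump 1, Jump 1]
   | GNot i \<Rightarrow> [NegTest (FAux (i + 1), MGet), Plain (FAux (k + 1), MSet True), Jump 1, Jump 1]
   | GAnd i j \<Rightarrow> [NegTest (FAux (i + 1), MGet), Jump 3, PosTest (FAux (j + 1), MGet),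
                  Plain (FAux (k + 1), MSet True)]
   | GOr i j \<Rightarrow> [PosTest (FAux (i + 1), MGet), Plain (FAux (k + 1), MSet True),
                 PosTest (FAux (j + 1), MGet), Plain (FAux (k + 1), MSet True)])"

definition output_code :: "nat \<Rightarrow> instr list" where
  "output_code m = [PosTest (FAux m, MGet), Plain (FOut, MSet True), Term]"

definition circuit_program :: "gate list \<Rightarrow> instr list" where
  "circuit_program C = concat (map (\<lambda>k. gate_code k (C ! k)) [0..<length C]) @ output_code (length C)"

lemma length_gate_code [simp]: "length (gate_code k g) = 4"
  by (cases g) (auto simp: gate_code_def)

lemma length_concat_gate_code: "length (concat (map (\<lambda>k. gate_code k (C ! k)) [0..<m])) = 4 * m"
  by (induction m) auto

lemma length_circuit_program: "length (circuit_program C) = 4 * length C + 3"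
  by (simp add: circuit_program_def length_concat_gate_code output_code_def)

lemma circuit_program_IS_br: "C \<noteq> [] \<Longrightarrow> circuit_program C \<in> IS_br"
proof -
  assume "C \<noteq> []"
  have "instr_ok u" if "u \<in> set (gate_code k g)" for u k g
    using that by (cases g) (auto simp: gate_code_def)
  then show ?thesis
    using \<open>C \<noteq> []\<close> by (auto simp: IS_br_def circuit_program_def output_code_def Suc_le_eq)
qed

lemma circuit_program_gate:
  assumes "k < length C" "d < 4"
  shows "circuit_program C ! (4 * k + d) = gate_code k (C ! k) ! d"
proof -
  have "concat (map (\<lambda>k. gate_code k (C ! k)) [0..<m]) ! (4 * k + d) = gate_code k (C ! k) ! d"
    if "k < m" for m
    using that assms(2)
  proof (induction m)
    case (Suc m)
    then show ?case
    proof (cases "k < m")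
      case False
      then have "k = m" using Suc.prems by simp
      then show ?thesis by (simp add: nth_append length_concat_gate_code)
    qed (auto simp: nth_append length_concat_gate_code)
  qed simp
  then show ?thesis
    using assms by (simp add: circuit_program_def nth_append length_concat_gate_code)
qed

lemma circuit_program_output:
  "d < 3 \<Longrightarrow> circuit_program C ! (4 * length C + d) = output_code (length C) ! d"
  by (simp add: circuit_program_def nth_append length_concat_gate_code)

definition aux_after :: "bool list \<Rightarrow> nat \<Rightarrow> nat \<Rightarrow> bool" where
  "aux_after vs k r \<longleftrightarrow> 0 < r \<and> r \<le> k \<and> vs ! (r - 1)"

lemma aux_after_0: "aux_after vs 0 = (\<lambda>_. False)"
  by (auto simp: aux_after_def fun_eq_iff)

lemma aux_after_Suc:
  "aux_after vs (Suc k) = (if vs ! k then (aux_after vs k)(Suc k := True) else aux_after vs k)"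
  by (auto simp: aux_after_def fun_eq_iff le_Suc_eq)

lemma aux_after_gate: "i < k \<Longrightarrow> aux_after vs k (Suc i) = vs ! i"
  by (simp add: aux_after_def)

lemma aux_after_reset: "(aux_after vs k)(Suc k := False) = aux_after vs k"
  by (simp add: aux_after_def fun_eq_iff)

definition reaches :: "instr list \<Rightarrow> bool list \<Rightarrow> nat \<times> regs \<Rightarrow> nat \<times> regs \<Rightarrow> bool" where
  "reaches X w = (\<lambda>c c'. step X w c = Some c')\<^sup>*\<^sup>*"

lemma reaches_step: "step X w c = Some c'' \<Longrightarrow> reaches X w c'' c' \<Longrightarrow> reaches X w c c'"
  unfolding reaches_def by (rule converse_rtranclp_into_rtranclp)

lemma reaches_refl: "c = c' \<Longrightarrow> reaches X w c c'"
  unfolding reaches_def by simp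

lemma reaches_trans: "reaches X w c c' \<Longrightarrow> reaches X w c' c'' \<Longrightarrow> reaches X w c c''"
  unfolding reaches_def by (rule rtranclp_trans)

lemma reaches_terminates:
  "reaches X w (i, s) (j, s') \<Longrightarrow> terminates X w j s' r \<Longrightarrow> terminates X w i s r"
  unfolding reaches_def
  by (induction rule: converse_rtranclp_induct2) (auto intro: step_terminates)

lemma step_Suc: "step X w (Suc i, s) = (if i < length X then (case X ! i of
      Term \<Rightarrow> None
    | Jump l \<Rightarrow> if l = 0 then None else Some (Suc i + l, s)
    | Plain a \<Rightarrow> (case exec_basic w a s of None \<Rightarrow> None | Some (rep, s') \<Rightarrow> Some (Suc (Suc i), s'))
    | PosTest a \<Rightarrow> (case exec_basic w a s of None \<Rightarrow> None
         | Some (rep, s') \<Rightarrow> Some (if rep then Suc (Suc i) else Suc (Suc (Suc i)), s'))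
    | NegTest a \<Rightarrow> (case exec_basic w a s of None \<Rightarrow> None
         | Some (rep, s') \<Rightarrow> Some (if rep then Suc (Suc (Suc i)) else Suc (Suc i), s'))) else None)"
  by (simp add: step.simps split: instr.splits option.splits prod.splits)

lemma gate_code_reaches:
  assumes wf: "\<forall>k<length C. gate_ok n k (C ! k)" and w: "length w = n" and k: "k < length C"
    and vs: "vs = circuit_vals w C"
  shows "reaches (circuit_program C) w (Suc (4 * k), aux_after vs k, False)
    (Suc (4 * Suc k), aux_after vs (Suc k), False)"
proof -
  let ?X = "circuit_program C"
  have code: "?X ! (4 * k) = gate_code k (C ! k) ! 0" "?X ! Suc (4 * k) = gate_code k (C ! k) ! 1"
    "?X ! Suc (Suc (4 * k)) = gate_code k (C ! k) ! 2"
    "?X ! Suc (Suc (Suc (4 * k))) = gate_code k (C ! k) ! 3"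
    using circuit_program_gate[OF k, of 0] circuit_program_gate[OF k, of 1]
      circuit_program_gate[OF k, of 2] circuit_program_gate[OF k, of 3]
    by (simp_all add: numeral_eq_Suc)
  have len: "4 * k < length ?X" "Suc (4 * k) < length ?X" "Suc (Suc (4 * k)) < length ?X"
    "Suc (Suc (Suc (4 * k))) < length ?X"
    using k by (simp_all add: length_circuit_program)
  have val: "vs ! k = gate_val w (take k vs) (C ! k)"
    using circuit_vals_gate[OF k] vs by simp
  note exec = step_Suc code len gate_code_def aux_after_gate aux_after_Suc aux_after_reset
  show ?thesis
  proof (cases "C ! k")
    case (GIn j)
    then have "j < length w" using wf k w by auto
    with GIn val show ?thesis
      by (cases "w ! j")
        (((rule reaches_step, (simp add: exec; fail))+, rule reaches_refl, simp add: exec)+)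
  next
    case (GConst b)
    with val show ?thesis
      by (cases b)
        (((rule reaches_step, (simp add: exec; fail))+, rule reaches_refl, simp add: exec)+)
  next
    case (GNot i)
    then have "i < k" using wf k by auto
    with GNot val show ?thesis
      by (cases "vs ! i")
        (((rule reaches_step, (simp add: exec; fail))+, rule reaches_refl, simp add: exec)+)
  next
    case (GAnd i j)
    then have "i < k" "j < k" using wf k by auto
    with GAnd val show ?thesis
      by (cases "vs ! i"; cases "vs ! j")
        (((rule reaches_step, (simp add: exec; fail))+, rule reaches_refl, simp add: exec)+)
  next
    case (GOr i j)
    then have "i < k" "j < k" using wf k by auto
    with GOr val show ?thesis
      by (cases "vs ! i"; cases "vs ! j")
        (((rule reaches_step, (simp add: exec; fail))+, rule reaches_refl, simp add: exec)+)
  qed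
qed

lemma gates_reach:
  assumes wf: "\<forall>k<length C. gate_ok n k (C ! k)" and w: "length w = n"
    and vs: "vs = circuit_vals w C"
  shows "k \<le> length C \<Longrightarrow>
    reaches (circuit_program C) w (1, \<lambda>_. False, False) (Suc (4 * k), aux_after vs k, False)"
proof (induction k)
  case 0
  then show ?case by (simp add: reaches_refl aux_after_0)
next
  case (Suc k)
  then have "reaches (circuit_program C) w (1, \<lambda>_. False, False) (Suc (4 * k), aux_after vs k, False)"
    by simp
  moreover have "reaches (circuit_program C) w (Suc (4 * k), aux_after vs k, False)
      (Suc (4 * Suc k), aux_after vs (Suc k), False)"
    using gate_code_reaches[OF wf w _ vs] Suc.prems by simp
  ultimately show ?case by (rule reaches_trans)
qed

lemma output_code_terminates:
  assumes "C \<noteq> []"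
  shows "terminates (circuit_program C) w (Suc (4 * length C)) (aux_after vs (length C), False)
    (vs ! (length C - 1))"
proof -
  let ?X = "circuit_program C" and ?m = "length C"
  have code: "?X ! (4 * ?m) = PosTest (FAux ?m, MGet)" "?X ! Suc (4 * ?m) = Plain (FOut, MSet True)"
    "?X ! Suc (Suc (4 * ?m)) = Term"
    using circuit_program_output[of 0 C] circuit_program_output[of 1 C] circuit_program_output[of 2 C]
    by (simp_all add: output_code_def numeral_eq_Suc)
  have len: "4 * ?m < length ?X" "Suc (4 * ?m) < length ?X" "Suc (Suc (4 * ?m)) < length ?X"
    by (simp_all add: length_circuit_program)
  have last: "aux_after vs ?m ?m = vs ! (?m - 1)"
    using assms by (simp add: aux_after_def)
  have halt: "terminates ?X w (Suc (Suc (Suc (4 * ?m)))) s (snd s)" for s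
    using code len by (intro terminates.halt) simp_all
  have "reaches ?X w (Suc (4 * ?m), aux_after vs ?m, False)
      (Suc (Suc (Suc (4 * ?m))), aux_after vs ?m, vs ! (?m - 1))"
    by (cases "vs ! (?m - 1)")
      (((rule reaches_step, (simp add: step_Suc code len last; fail))+, rule reaches_refl, simp)+)
  from reaches_terminates[OF this halt] show ?thesis by simp
qed

lemma circuit_program_correct:
  assumes wf: "wf_circuit n C" and w: "length w = n"
  shows "terminates (circuit_program C) w 1 (\<lambda>_. False, False) (circuit_out w C)"
proof -
  define vs where "vs = circuit_vals w C"
  have C: "C \<noteq> []" "\<forall>k<length C. gate_ok n k (C ! k)" using wf by (auto simp: wf_circuit_def)
  have "length vs = length C" by (simp add: vs_def)
  then have "vs \<noteq> []" using C(1) by auto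
  then have "circuit_out w C = vs ! (length C - 1)"
    by (simp add: circuit_out_def vs_def last_conv_nth)
  then show ?thesis
    using reaches_terminates[OF gates_reach[OF C(2) w vs_def order_refl] output_code_terminates[OF C(1)]]
    by simp
qed

lemma P_poly_subset_P_lis: "P_poly \<subseteq> lang_of ` P_lis"
proof
  fix L assume "L \<in> P_poly"
  then obtain h :: "nat poly" where h: "\<forall>n. \<exists>C. wf_circuit n C \<and> length C \<le> poly h n \<and>
      (\<forall>w. length w = n \<longrightarrow> (circuit_out w C \<longleftrightarrow> w \<in> L))" by (auto simp: P_poly_def)
  define F where "F = (\<lambda>(n::nat) w. w \<in> L)"
  have "\<exists>X. X \<in> IS_br \<and> computes X n (F n) \<and> length X \<le> poly (smult 4 h + [:3:]) n" for n
  proof -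
    obtain C where C: "wf_circuit n C" "length C \<le> poly h n"
      "\<forall>w. length w = n \<longrightarrow> (circuit_out w C \<longleftrightarrow> w \<in> L)" using h by blast
    have "computes (circuit_program C) n (F n)"
      unfolding computes_def F_def using circuit_program_correct[OF C(1)] C(3) by auto
    moreover have "circuit_program C \<in> IS_br"
      using C(1) by (intro circuit_program_IS_br) (auto simp: wf_circuit_def)
    ultimately show ?thesis
      using C(2) by (intro exI[of _ "circuit_program C"]) (simp add: length_circuit_program)
  qed
  then have "F \<in> P_lis" unfolding P_lis_def by blast
  moreover have "lang_of F = L" by (simp add: lang_of_def F_def)
  ultimately show "L \<in> lang_of ` P_lis" by blast
qed

theorem theorem6:
  shows "lang_of ` P_lis = P_poly"
  using P_lis_subset_P_poly P_poly_subset_P_lis by (rule subset_antisym)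

end
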